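(* Let $r,c\in\mathbb{N}$, $n=r+c$, $N=2^n$, and $X=(X_1,X_2)$ with $X_1\subset\{0,1\}^n$ the strings ending in $0^c$ and $X_2\subset\{0,1\}^n$ the strings beginning with $0^r$. Consider two distributions on pairs $(\varphi,y)\in S_N\times\{0,1\}^r$: $\mathcal D_1$: sample $\varphi\sim S_N$ uniformly, sample $x\sim\{0,1\}^r$ uniformly, let $y=\mathsf{Sp}^{\varphi}(x)$, output $(\varphi,y)$. $\mathcal D_2$: sample $y\sim\{0,1\}^r$ uniformly, sample $\pi\sim\mathcal D_X$, output $(\varphi,y)$ with $\varphi=\mathsf{XOR}_{y\|0^c}\circ\pi$. Then $\mathcal D_1$ and $\mathcal D_2$ are identical distributions.
   Context: Permutations of $\{0,1\}^n$ are identified with $S_N$. $\mathsf{Sp}^{\varphi}(x)$ is the first $r$ bits of $\varphi(x\|0^c)$. $\mathsf{XOR}_{y\|0^c}$ is the permutation of $\{0,1\}^n$ given by $(a\|b)\mapsto (a\oplus y)\|b$ for $a\in\{0,1\}^r$, $b\in\{0,1\}^c$. For $\pi\in S_N$, $X_\pi=\{(i,j): i\in X_1,\ j\in X_2,\ \pi(i)=j\}$; the distribution $\mathcal D_X$ on $S_N$ is $\Pr_{\Pi\sim\mathcal D_X}[\Pi=\pi]=|X_\pi|/\sum_{\sigma\in S_N}|X_\sigma|$. *)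

theory Defs
  imports "HOL-Probability.Probability" "HOL-Combinatorics.Permutations"
begin

definition bits :: "nat \<Rightarrow> bool list set" where
  "bits m = {s. length s = m}"

definition SN :: "nat \<Rightarrow> (bool list \<Rightarrow> bool list) set" where
  "SN n = {\<phi>. \<phi> permutes bits n}"

definition X1 :: "nat \<Rightarrow> nat \<Rightarrow> bool list set" where
  "X1 r c = {s \<in> bits (r + c). drop r s = replicate c False}"

definition X2 :: "nat \<Rightarrow> nat \<Rightarrow> bool list set" where
  "X2 r c = {s \<in> bits (r + c). take r s = replicate r False}"

definition Xpi :: "nat \<Rightarrow> nat \<Rightarrow> (bool list \<Rightarrow> bool list) \<Rightarrow> (bool list \<times> bool list) set" where
  "Xpi r c \<pi> = {(i, j). i \<in> X1 r c \<and> j \<in> X2 r c \<and> \<pi> i = j}"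

definition DX :: "nat \<Rightarrow> nat \<Rightarrow> (bool list \<Rightarrow> bool list) pmf" where
  "DX r c = embed_pmf (\<lambda>\<pi>. if \<pi> \<in> SN (r + c)
      then real (card (Xpi r c \<pi>)) / (\<Sum>\<sigma>\<in>SN (r + c). real (card (Xpi r c \<sigma>)))
      else 0)"

definition Sp :: "nat \<Rightarrow> nat \<Rightarrow> (bool list \<Rightarrow> bool list) \<Rightarrow> bool list \<Rightarrow> bool list" where
  "Sp r c \<phi> x = take r (\<phi> (x @ replicate c False))"

definition XORy :: "nat \<Rightarrow> nat \<Rightarrow> bool list \<Rightarrow> bool list \<Rightarrow> bool list" where
  "XORy r c y s = (if s \<in> bits (r + c)
      then map2 (\<lambda>a b. a \<noteq> b) (take r s) y @ drop r s else s)"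

definition D1 :: "nat \<Rightarrow> nat \<Rightarrow> ((bool list \<Rightarrow> bool list) \<times> bool list) pmf" where
  "D1 r c = do {
     \<phi> \<leftarrow> pmf_of_set (SN (r + c));
     x \<leftarrow> pmf_of_set (bits r);
     return_pmf (\<phi>, Sp r c \<phi> x) }"

definition D2 :: "nat \<Rightarrow> nat \<Rightarrow> ((bool list \<Rightarrow> bool list) \<times> bool list) pmf" where
  "D2 r c = do {
     y \<leftarrow> pmf_of_set (bits r);
     \<pi> \<leftarrow> DX r c;
     return_pmf (XORy r c y \<circ> \<pi>, y) }"

end

theory Submission
  imports Defs
begin

text \<open>
  For \<open>\<phi> \<in> S_N\<close> and \<open>y \<in> {0,1}^r\<close>, the pairs \<open>(i, \<pi> i)\<close> of \<open>\<pi> = XOR_{y||0^c} \<circ> \<phi>\<close>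
  running from \<open>X_1\<close> to \<open>X_2\<close> are exactly the \<open>(x||0^c, \<pi>(x||0^c))\<close> with \<open>Sp^\<phi>(x) = y\<close>.
  Since \<open>\<phi> \<mapsto> XOR_{y||0^c} \<circ> \<phi>\<close> is an involution of \<open>S_N\<close>, both \<open>D_1\<close> and \<open>D_2\<close> give
  \<open>(\<phi>, y)\<close> a probability proportional to \<open>|{x. Sp^\<phi>(x) = y}|\<close>, and two distributions with
  proportional mass functions coincide.
\<close>

lemma pmf_eq_if_proportional:
  assumes proportional: "\<And>z. pmf q z = K * pmf p z"
  shows "p = q"
proof -
  obtain z where "z \<in> set_pmf p"
    using set_pmf_not_empty[of p] by blast
  then have "0 < pmf p z"
    by (rule pmf_positive)
  moreover have "0 \<le> K * pmf p z"
    using proportional[of z] pmf_nonneg[of q z] by simp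
  ultimately have "0 \<le> K"
    by (simp add: zero_le_mult_iff)
  have "1 = (\<integral>\<^sup>+ z. pmf q z \<partial>count_space UNIV)"
    by (simp add: nn_integral_pmf)
  also have "\<dots> = (\<integral>\<^sup>+ z. ennreal K * pmf p z \<partial>count_space UNIV)"
    using \<open>0 \<le> K\<close> by (simp add: proportional ennreal_mult)
  also have "\<dots> = ennreal K"
    by (simp add: nn_integral_cmult nn_integral_pmf)
  finally have "K = 1"
    using \<open>0 \<le> K\<close> by simp
  with proportional show ?thesis
    by (intro pmf_eqI) simp
qed

lemma pmf_embed_pmf_normalized:
  assumes "finite A" and "\<And>x. x \<in> A \<Longrightarrow> 0 \<le> w x" and "0 < (\<Sum>x\<in>A. w x)"
  shows "pmf (embed_pmf (\<lambda>x. if x \<in> A then w x / (\<Sum>x\<in>A. w x) else 0)) x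
      = (if x \<in> A then w x / (\<Sum>x\<in>A. w x) else 0)"
proof (rule pmf_embed_pmf)
  let ?f = "\<lambda>x. if x \<in> A then w x / (\<Sum>x\<in>A. w x) else 0"
  show "0 \<le> ?f x" for x
    using assms by simp
  have "(\<integral>\<^sup>+ x. ennreal (?f x) \<partial>count_space UNIV) = (\<Sum>x\<in>A. ennreal (?f x))"
    by (rule nn_integral_count_space'[OF \<open>finite A\<close>]) auto
  also have "\<dots> = ennreal (\<Sum>x\<in>A. w x / (\<Sum>x\<in>A. w x))"
    using assms by (subst sum_ennreal) auto
  also have "\<dots> = 1"
    using assms(3) by (simp add: sum_divide_distrib[symmetric])
  finally show "(\<integral>\<^sup>+ x. ennreal (?f x) \<partial>count_space UNIV) = 1" .
qed

lemma finite_bits: "finite (bits m)"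
proof -
  have "bits m = {xs. set xs \<subseteq> (UNIV :: bool set) \<and> length xs = m}"
    by (auto simp: bits_def)
  then show ?thesis
    using finite_lists_length_eq[of "UNIV :: bool set" m] by simp
qed

lemma bits_nonempty: "bits m \<noteq> {}"
  using length_replicate[of m False] unfolding bits_def by blast

lemma finite_SN: "finite (SN n)"
  unfolding SN_def using finite_permutations[OF finite_bits] by simp

lemma id_in_SN: "id \<in> SN n"
  by (simp add: SN_def)

lemma SN_nonempty: "SN n \<noteq> {}"
  using id_in_SN by blast

lemma SN_apply_in_bits: "\<phi> \<in> SN n \<Longrightarrow> s \<in> bits n \<Longrightarrow> \<phi> s \<in> bits n"
  unfolding SN_def by (simp add: permutes_in_image)

lemma padded_in_bits: "x \<in> bits r \<Longrightarrow> x @ replicate c False \<in> bits (r + c)"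
  by (simp add: bits_def)

lemma Sp_in_bits: "\<phi> \<in> SN (r + c) \<Longrightarrow> x \<in> bits r \<Longrightarrow> Sp r c \<phi> x \<in> bits r"
  using SN_apply_in_bits[OF _ padded_in_bits] by (fastforce simp: Sp_def bits_def)

lemma map2_xor_cancel:
  "length a = length y \<Longrightarrow> map2 (\<lambda>a b. a \<noteq> b) (map2 (\<lambda>a b. a \<noteq> b) a y) y = a"
  by (induction a y rule: list_induct2) auto

lemma map2_xor_eq_zeros_iff:
  "length a = length y \<Longrightarrow> map2 (\<lambda>a b. a \<noteq> b) a y = replicate (length a) False \<longleftrightarrow> a = y"
  by (induction a y rule: list_induct2) auto

lemma XORy_in_bits: "length y = r \<Longrightarrow> s \<in> bits (r + c) \<Longrightarrow> XORy r c y s \<in> bits (r + c)"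
  by (auto simp: XORy_def bits_def)

lemma XORy_XORy:
  assumes "length y = r"
  shows "XORy r c y (XORy r c y s) = s"
proof (cases "s \<in> bits (r + c)")
  case True
  then have "length (take r s) = length y"
    using assms by (simp add: bits_def)
  with True XORy_in_bits[OF assms True] show ?thesis
    using assms map2_xor_cancel by (simp add: XORy_def)
qed (simp add: XORy_def)

lemma XORy_comp_XORy_comp: "length y = r \<Longrightarrow> XORy r c y \<circ> (XORy r c y \<circ> \<phi>) = \<phi>"
  by (simp add: fun_eq_iff XORy_XORy)

lemma XORy_permutes:
  assumes "length y = r"
  shows "XORy r c y permutes bits (r + c)"
proof (rule bij_imp_permutes)
  show "bij_betw (XORy r c y) (bits (r + c)) (bits (r + c))"
    by (rule bij_betwI[where g = "XORy r c y"]) (auto simp: XORy_in_bits XORy_XORy assms)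
qed (simp add: XORy_def)

lemma XORy_comp_in_SN_iff: "length y = r \<Longrightarrow> XORy r c y \<circ> \<phi> \<in> SN (r + c) \<longleftrightarrow> \<phi> \<in> SN (r + c)"
  by (metis SN_def XORy_comp_XORy_comp XORy_permutes mem_Collect_eq permutes_compose)

lemma X1_iff: "i \<in> X1 r c \<longleftrightarrow> (\<exists>x\<in>bits r. i = x @ replicate c False)"
proof
  assume "i \<in> X1 r c"
  then have "take r i \<in> bits r" "i = take r i @ replicate c False"
    unfolding X1_def bits_def by (auto, metis append_take_drop_id)
  then show "\<exists>x\<in>bits r. i = x @ replicate c False" by blast
qed (auto simp: X1_def bits_def)

lemma XORy_in_X2_iff:
  assumes "y \<in> bits r" and "s \<in> bits (r + c)"
  shows "XORy r c y s \<in> X2 r c \<longleftrightarrow> take r s = y"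
proof -
  have len: "length (take r s) = length y"
    using assms by (simp add: bits_def)
  have "XORy r c y s \<in> X2 r c \<longleftrightarrow>
      map2 (\<lambda>a b. a \<noteq> b) (take r s) y = replicate (length (take r s)) False"
    using assms by (auto simp: X2_def XORy_def bits_def)
  then show ?thesis
    using map2_xor_eq_zeros_iff[OF len] by simp
qed

lemma finite_Xpi: "finite (Xpi r c \<pi>)"
proof (rule finite_subset)
  show "Xpi r c \<pi> \<subseteq> bits (r + c) \<times> bits (r + c)"
    by (auto simp: Xpi_def X1_def X2_def)
qed (simp add: finite_bits)

lemma card_Xpi_eq_card_X1_filter: "card (Xpi r c \<pi>) = card {i \<in> X1 r c. \<pi> i \<in> X2 r c}"
proof -
  have "Xpi r c \<pi> = (\<lambda>i. (i, \<pi> i)) ` {i \<in> X1 r c. \<pi> i \<in> X2 r c}"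
    unfolding Xpi_def by auto
  then show ?thesis
    by (simp add: card_image inj_on_def)
qed

lemma card_Xpi_XORy_comp:
  assumes \<phi>: "\<phi> \<in> SN (r + c)" and y: "y \<in> bits r"
  shows "card (Xpi r c (XORy r c y \<circ> \<phi>)) = card {x \<in> bits r. Sp r c \<phi> x = y}"
proof -
  let ?pad = "\<lambda>x :: bool list. x @ replicate c False"
  have "XORy r c y (\<phi> (?pad x)) \<in> X2 r c \<longleftrightarrow> Sp r c \<phi> x = y" if "x \<in> bits r" for x
    using XORy_in_X2_iff[OF y SN_apply_in_bits[OF \<phi> padded_in_bits[OF that]]]
    by (simp add: Sp_def)
  then have "{i \<in> X1 r c. (XORy r c y \<circ> \<phi>) i \<in> X2 r c} = ?pad ` {x \<in> bits r. Sp r c \<phi> x = y}"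
    using X1_iff[of _ r c] by auto
  moreover have "inj ?pad"
    by (simp add: inj_on_def)
  ultimately show ?thesis
    by (simp add: card_Xpi_eq_card_X1_filter card_image inj_on_subset)
qed

lemma Xpi_total_weight_pos: "0 < (\<Sum>\<sigma>\<in>SN (r + c). real (card (Xpi r c \<sigma>)))"
proof (rule sum_pos2[OF finite_SN id_in_SN])
  have "(replicate (r + c) False, replicate (r + c) False) \<in> Xpi r c id"
    by (auto simp: Xpi_def X1_def X2_def bits_def)
  then show "0 < real (card (Xpi r c id))"
    using finite_Xpi card_gt_0_iff by fastforce
qed auto

lemma pmf_DX: "pmf (DX r c) \<pi> = (if \<pi> \<in> SN (r + c)
    then real (card (Xpi r c \<pi>)) / (\<Sum>\<sigma>\<in>SN (r + c). real (card (Xpi r c \<sigma>))) else 0)"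
  unfolding DX_def
  by (rule pmf_embed_pmf_normalized[OF finite_SN _ Xpi_total_weight_pos]) simp

lemma pmf_D1: "pmf (D1 r c) (\<phi>, y) = (if \<phi> \<in> SN (r + c)
    then real (card {x \<in> bits r. Sp r c \<phi> x = y}) / (real (card (SN (r + c))) * real (card (bits r)))
    else 0)"
proof -
  have "pmf (D1 r c) (\<phi>, y) = (\<Sum>\<psi>\<in>SN (r + c). \<Sum>x\<in>bits r. indicat_real {(\<phi>, y)} (\<psi>, Sp r c \<psi> x))
      / (real (card (SN (r + c))) * real (card (bits r)))"
    unfolding D1_def
    by (simp add: pmf_bind integral_pmf_of_set finite_bits bits_nonempty finite_SN SN_nonempty)
  also have "(\<Sum>\<psi>\<in>SN (r + c). \<Sum>x\<in>bits r. indicat_real {(\<phi>, y)} (\<psi>, Sp r c \<psi> x))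
      = (\<Sum>\<psi>\<in>SN (r + c). if \<psi> = \<phi> then real (card {x \<in> bits r. Sp r c \<phi> x = y}) else 0)"
    by (intro sum.cong refl) (auto simp: indicator_def finite_bits intro!: arg_cong[where f = card])
  finally show ?thesis
    by (simp add: finite_SN)
qed

lemma pmf_map_XORy_comp:
  assumes "y' \<in> bits r"
  shows "pmf (map_pmf (\<lambda>\<pi>. (XORy r c y' \<circ> \<pi>, y')) (DX r c)) (\<phi>, y)
    = (if y' = y then pmf (DX r c) (XORy r c y \<circ> \<phi>) else 0)"
proof (cases "y' = y")
  case True
  have len: "length y = r"
    using assms True by (simp add: bits_def)
  let ?f = "\<lambda>\<pi> :: bool list \<Rightarrow> bool list. (XORy r c y \<circ> \<pi>, y)"
  have "inj ?f"
  proof (rule injI)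
    fix \<pi> \<sigma>
    assume "?f \<pi> = ?f \<sigma>"
    then have "XORy r c y \<circ> (XORy r c y \<circ> \<pi>) = XORy r c y \<circ> (XORy r c y \<circ> \<sigma>)"
      by simp
    then show "\<pi> = \<sigma>"
      by (simp only: XORy_comp_XORy_comp[OF len])
  qed
  then have "pmf (map_pmf ?f (DX r c)) (?f (XORy r c y \<circ> \<phi>)) = pmf (DX r c) (XORy r c y \<circ> \<phi>)"
    by (rule pmf_map_inj')
  then show ?thesis
    using True by (simp add: XORy_comp_XORy_comp[OF len])
qed (auto intro!: pmf_map_outside)

lemma pmf_D2: "pmf (D2 r c) (\<phi>, y) =
    (if y \<in> bits r then pmf (DX r c) (XORy r c y \<circ> \<phi>) / real (card (bits r)) else 0)"
proof -
  have "D2 r c = pmf_of_set (bits r) \<bind> (\<lambda>y'. map_pmf (\<lambda>\<pi>. (XORy r c y' \<circ> \<pi>, y')) (DX r c))"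
    unfolding D2_def map_pmf_def by simp
  then have "pmf (D2 r c) (\<phi>, y)
      = (\<Sum>y'\<in>bits r. pmf (map_pmf (\<lambda>\<pi>. (XORy r c y' \<circ> \<pi>, y')) (DX r c)) (\<phi>, y)) / real (card (bits r))"
    by (simp add: pmf_bind integral_pmf_of_set finite_bits bits_nonempty)
  also have "\<dots> = (\<Sum>y'\<in>bits r. if y' = y then pmf (DX r c) (XORy r c y \<circ> \<phi>) else 0)
      / real (card (bits r))"
    by (simp add: pmf_map_XORy_comp)
  finally show ?thesis
    by (simp add: finite_bits)
qed

lemma pmf_D2_proportional_D1:
  "pmf (D2 r c) z = real (card (SN (r + c))) / (\<Sum>\<sigma>\<in>SN (r + c). real (card (Xpi r c \<sigma>))) * pmf (D1 r c) z"
proof (cases z)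
  case (Pair \<phi> y)
  have "card (SN (r + c)) \<noteq> 0"
    using finite_SN SN_nonempty by auto
  show ?thesis
  proof (cases "y \<in> bits r")
    case True
    then have "length y = r"
      by (simp add: bits_def)
    with True \<open>card (SN (r + c)) \<noteq> 0\<close> Xpi_total_weight_pos[of r c] show ?thesis
      by (simp add: Pair pmf_D1 pmf_D2 pmf_DX XORy_comp_in_SN_iff card_Xpi_XORy_comp)
  next
    case False
    have "card {x \<in> bits r. Sp r c \<phi> x = y} = 0" if "\<phi> \<in> SN (r + c)"
    proof -
      have no_preimage: "{x \<in> bits r. Sp r c \<phi> x = y} = {}"
        using Sp_in_bits[OF that] False by auto
      show ?thesis
        unfolding no_preimage by (rule card.empty)
    qed
    with False show ?thesis
      by (simp add: Pair pmf_D1 pmf_D2)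
  qed
qed

theorem lemma5:
  fixes r c :: nat
  shows "D1 r c = D2 r c"
  by (rule pmf_eq_if_proportional[OF pmf_D2_proportional_D1])

end
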